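(* Let $u\in S^{n-1}$ and $K\in\mathcal S_n$. Then $M_uK\in\mathcal S_n$ and $M_u(K^c)=(M_uK)^c$. Moreover $\mathrm{Vol}(M_u(K^c))\ge \mathrm{Vol}(K^c)$.
   Context: For $x\in\mathbb R^n$, $B(x,1)$ denotes the closed Euclidean ball of radius $1$ centered at $x$. For $A\subseteq\mathbb R^n$, the $c$-dual of $A$ is $A^c=\bigcap_{x\in A}B(x,1)$ (with $\emptyset^c=\mathbb R^n$). The class $\mathcal S_n$ of ball-bodies consists of all sets of the form $A^c$, $A\subseteq\mathbb R^n$, i.e. all intersections of families of closed unit Euclidean balls (including $\emptyset$ and $\mathbb R^n$). For $u\in S^{n-1}$, $R_u$ denotes the reflection with respect to the hyperplane $u^\perp$, and the Minkowski symmetral of $K$ is $M_uK=\frac12K+\frac12R_uK$ (Minkowski sum; the Minkowski sum with $\emptyset$ is $\emptyset$). *)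

theory Defs
  imports "HOL-Analysis.Analysis"
begin

text \<open>c-dual: intersection of closed unit balls centred at points of A (empty set gives UNIV).\<close>
definition cdual :: "'a::euclidean_space set \<Rightarrow> 'a set" where
  "cdual A = (\<Inter>x\<in>A. cball x 1)"

definition ball_bodies :: "'a::euclidean_space set set" where
  "ball_bodies = {cdual A | A. True}"

definition refl_hyp :: "'a::euclidean_space \<Rightarrow> 'a \<Rightarrow> 'a" where
  "refl_hyp u x = x - (2 * (x \<bullet> u)) *\<^sub>R u"

definition msum :: "'a::euclidean_space set \<Rightarrow> 'a set \<Rightarrow> 'a set" where
  "msum A B = {a + b | a b. a \<in> A \<and> b \<in> B}"

definition mink_sym :: "'a::euclidean_space \<Rightarrow> 'a set \<Rightarrow> 'a set" where
  "mink_sym u K = msum ((\<lambda>x. (1/2) *\<^sub>R x) ` K) ((\<lambda>x. (1/2) *\<^sub>R x) ` (refl_hyp u ` K))"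

end

theory Submission
  imports Defs
begin

text \<open>
  Since \<open>R\<^sub>u\<close> is a linear isometric involution, the triangle inequality gives
  \<open>M\<^sub>u(K\<^sup>c) \<subseteq> (M\<^sub>uK)\<^sup>c\<close>. Conversely, a ball-body \<open>K\<close> lies in the unit ball
  internally tangent to it at a support point \<open>x\<close> with outer normal \<open>w\<close>, i.e.
  \<open>x - w \<in> K\<^sup>c\<close>; averaging the support points for the directions \<open>w\<close> and \<open>R\<^sub>u w\<close>
  yields, for every unit \<open>w\<close>, a point \<open>q \<in> M\<^sub>uK\<close> with \<open>q - w \<in> M\<^sub>u(K\<^sup>c)\<close>, and
  separating a point of \<open>(M\<^sub>uK)\<^sup>c\<close> from the closed convex set \<open>M\<^sub>u(K\<^sup>c)\<close> by a
  hyperplane with such a normal \<open>w\<close> is then impossible. Applied to \<open>K\<^sup>c\<close>, the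
  equality exhibits \<open>M\<^sub>uK = (M\<^sub>u(K\<^sup>c))\<^sup>c\<close> as a ball-body.

  For the volume, \<open>R\<^sub>u\<close> maps every line parallel to \<open>u\<close> onto itself, so such a line
  meets \<open>M\<^sub>uL\<close> in a segment at least as long as its chord in the compact convex
  set \<open>L\<close>; integrating the chord lengths over a slab of width one in direction
  \<open>u\<close> gives the volume.
\<close>

lemma mem_cdual: "x \<in> cdual A \<longleftrightarrow> (\<forall>a\<in>A. dist a x \<le> 1)"
  by (auto simp: cdual_def)

lemma subset_cdual_cdual: "A \<subseteq> cdual (cdual A)"
  by (auto simp: mem_cdual) (metis dist_commute)

lemma cdual_antimono: "A \<subseteq> B \<Longrightarrow> cdual B \<subseteq> cdual A"
  by (auto simp: cdual_def)

lemma cdual_cdual_cdual: "cdual (cdual (cdual A)) = cdual A"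
  by (meson cdual_antimono subset_cdual_cdual subset_antisym)

lemma cdual_cdual_ball_body: "K \<in> ball_bodies \<Longrightarrow> cdual (cdual K) = K"
  by (auto simp: ball_bodies_def cdual_cdual_cdual)

lemma cdual_in_ball_bodies: "cdual A \<in> ball_bodies"
  by (auto simp: ball_bodies_def)

lemma convex_cdual: "convex (cdual A)"
  by (auto simp: cdual_def intro!: convex_INT)

lemma compact_cdual: "A \<noteq> {} \<Longrightarrow> compact (cdual A)"
  unfolding cdual_def
  by (metis INF_lower bounded_cball bounded_subset closed_INT closed_cball compact_eq_bounded_closed ex_in_conv)

lemma cdual_empty [simp]: "cdual {} = UNIV"
  by (simp add: cdual_def)

lemma cdual_UNIV [simp]: "cdual UNIV = {}"
proof -
  obtain b :: 'a where "b \<in> Basis" using nonempty_Basis by blast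
  then have "dist (x + 2 *\<^sub>R b) x > 1" for x by (simp add: dist_norm)
  then show ?thesis by (meson UNIV_I equals0I mem_cdual not_le)
qed

lemma compact_ball_body: "K \<in> ball_bodies \<Longrightarrow> K \<noteq> UNIV \<Longrightarrow> compact K"
  by (auto simp: ball_bodies_def intro: compact_cdual)

lemma linear_refl_hyp: "linear (refl_hyp u)"
  by (rule linearI) (simp_all add: refl_hyp_def algebra_simps)

lemma inner_refl_hyp: "norm u = 1 \<Longrightarrow> refl_hyp u x \<bullet> y = x \<bullet> refl_hyp u y"
  by (simp add: refl_hyp_def algebra_simps inner_commute)

lemma refl_hyp_refl_hyp: "norm u = 1 \<Longrightarrow> refl_hyp u (refl_hyp u x) = x"
  by (simp add: refl_hyp_def algebra_simps norm_eq_1)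

lemma norm_refl_hyp: "norm u = 1 \<Longrightarrow> norm (refl_hyp u x) = norm x"
  by (simp add: norm_eq_sqrt_inner inner_refl_hyp refl_hyp_refl_hyp)

lemma mem_mink_sym:
  "z \<in> mink_sym u K \<longleftrightarrow> (\<exists>x\<in>K. \<exists>y\<in>K. z = (1/2) *\<^sub>R x + (1/2) *\<^sub>R refl_hyp u y)"
  by (auto simp: mink_sym_def msum_def)

lemma mink_sym_empty [simp]: "mink_sym u {} = {}"
  by (simp add: mink_sym_def msum_def)

lemma mink_sym_UNIV [simp]: "norm u = 1 \<Longrightarrow> mink_sym u UNIV = UNIV"
proof -
  assume u: "norm u = 1"
  have "z = (1/2) *\<^sub>R z + (1/2) *\<^sub>R refl_hyp u (refl_hyp u z)" for z
    by (simp add: refl_hyp_refl_hyp[OF u] flip: scaleR_add_left)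
  then show ?thesis by (metis UNIV_I UNIV_eq_I mem_mink_sym)
qed

lemma msum_eq_UN: "msum A B = (\<Union>a\<in>A. \<Union>b\<in>B. {a + b})"
  by (auto simp: msum_def)

lemma compact_mink_sym: "compact L \<Longrightarrow> compact (mink_sym u L)"
  unfolding mink_sym_def msum_def
  by (intro compact_sums compact_scaling compact_continuous_image linear_continuous_on
      linear_refl_hyp[THEN linear_conv_bounded_linear[THEN iffD1]])

lemma convex_mink_sym: "convex L \<Longrightarrow> convex (mink_sym u L)"
  unfolding mink_sym_def msum_eq_UN
  by (intro convex_sums convex_scaling convex_linear_image linear_refl_hyp)

lemma mink_sym_cdual_subset:
  assumes u: "norm u = 1"
  shows "mink_sym u (cdual K) \<subseteq> cdual (mink_sym u K)"
proof
  fix p assume "p \<in> mink_sym u (cdual K)"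
  then obtain y y' where y: "y \<in> cdual K" "y' \<in> cdual K"
    and p: "p = (1/2) *\<^sub>R y + (1/2) *\<^sub>R refl_hyp u y'"
    by (auto simp: mem_mink_sym)
  show "p \<in> cdual (mink_sym u K)"
    unfolding mem_cdual
  proof
    fix q assume "q \<in> mink_sym u K"
    then obtain x x' where x: "x \<in> K" "x' \<in> K"
      and q: "q = (1/2) *\<^sub>R x + (1/2) *\<^sub>R refl_hyp u x'"
      by (auto simp: mem_mink_sym)
    have "q - p = (1/2) *\<^sub>R (x - y) + (1/2) *\<^sub>R refl_hyp u (x' - y')"
      by (simp add: p q linear_diff[OF linear_refl_hyp] algebra_simps)
    then have "norm (q - p) \<le> (1/2) * norm (x - y) + (1/2) * norm (x' - y')"
      by (metis norm_triangle_ineq norm_refl_hyp[OF u] norm_scaleR abs_of_pos half_gt_zero zero_less_one)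
    also have "\<dots> \<le> 1"
    proof -
      have "norm (x - y) \<le> 1" "norm (x' - y') \<le> 1"
        using x y by (auto simp: mem_cdual dist_norm)
      then show ?thesis by linarith
    qed
    finally show "dist q p \<le> 1" by (simp add: dist_norm)
  qed
qed

text \<open>
  If \<open>d\<close> lies outside the unit ball \<open>B(-w, 1)\<close>, which touches the hyperplane
  \<open>w\<^sup>\<bottom>\<close> at \<open>0\<close>, then the spindle of \<open>0\<close> and \<open>d\<close> (the points lying in every unit ball
  that contains both) has a point strictly beyond that hyperplane. For \<open>d \<bullet> w \<le> 0\<close> the witness is a
  short step along \<open>d + s w\<close>; the identity below writes \<open>|g - e|\<^sup>2 - 1\<close> as a
  combination of the hypotheses with coefficients of the right signs.
\<close>
lemma spindle_point_beyond_hyperplane: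
  fixes d w :: "'a::real_inner"
  assumes w: "norm w = 1" and outside: "norm (d + w) > 1"
  obtains e where "e \<bullet> w > 0"
    and "\<And>g. norm g \<le> 1 \<Longrightarrow> norm (g - d) \<le> 1 \<Longrightarrow> norm (g - e) \<le> 1"
proof (cases "d \<bullet> w > 0")
  case True
  then show ?thesis by (rule that)
next
  case False
  have ww: "w \<bullet> w = 1" using w by (simp add: norm_eq_1)
  define s where "s = (d \<bullet> d) / 4 - (d \<bullet> w) / 2"
  define Y where "Y = d \<bullet> d - 2 * s"
  define X where "X = (d + s *\<^sub>R w) \<bullet> (d + s *\<^sub>R w)"
  define \<theta> where "\<theta> = Y / (X + Y)"
  define e where "e = \<theta> *\<^sub>R (d + s *\<^sub>R w)"
  have "1 < (d + w) \<bullet> (d + w)"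
    using outside by (simp flip: power2_norm_eq_inner)
  then have Y: "Y > 0"
    by (simp add: Y_def s_def inner_add_left inner_add_right ww inner_commute)
  have s: "s \<ge> 0" using False inner_ge_zero[of d] unfolding s_def by linarith
  have X: "X \<ge> 0" by (simp add: X_def)
  have \<theta>: "0 < \<theta>" "\<theta> \<le> 1" "\<theta> * X \<le> Y"
    using X Y by (auto simp: \<theta>_def field_simps)
  show ?thesis
  proof (rule that)
    show "e \<bullet> w > 0"
      using Y \<theta> by (simp add: e_def s_def Y_def inner_add_left ww)
  next
    fix g assume g: "norm g \<le> 1" "norm (g - d) \<le> 1"
    have "(norm (g - e))\<^sup>2 - 1 = (1 - \<theta> + \<theta> * s) * ((norm g)\<^sup>2 - 1)
        + \<theta> * ((norm (g - d))\<^sup>2 - 1) - \<theta> * s * (norm (g + w))\<^sup>2 - \<theta> * (Y - \<theta> * X)"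
      unfolding power2_norm_eq_inner e_def X_def Y_def
      by (simp add: ww inner_commute algebra_simps)
    also have "\<dots> \<le> 0"
    proof -
      have "(1 - \<theta> + \<theta> * s) * ((norm g)\<^sup>2 - 1) \<le> 0"
        using g s \<theta> by (intro mult_nonneg_nonpos) (auto simp: power_le_one)
      moreover have "\<theta> * ((norm (g - d))\<^sup>2 - 1) \<le> 0"
        using g \<theta> by (intro mult_nonneg_nonpos) (auto simp: power_le_one)
      moreover have "\<theta> * s * (norm (g + w))\<^sup>2 \<ge> 0" "\<theta> * (Y - \<theta> * X) \<ge> 0"
        using s \<theta> by auto
      ultimately show ?thesis by linarith
    qed
    finally show "norm (g - e) \<le> 1"
      by (simp add: power_le_one_iff)
  qed
qed

lemma ball_body_subset_supporting_ball:
  assumes K: "K \<in> ball_bodies" and w: "norm w = 1"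
    and x: "x \<in> K" and max: "\<forall>k\<in>K. k \<bullet> w \<le> x \<bullet> w"
  shows "K \<subseteq> cball (x - w) 1"
proof (rule ccontr)
  assume "\<not> K \<subseteq> cball (x - w) 1"
  then obtain k where k: "k \<in> K" and "dist k (x - w) > 1"
    by (auto simp: subset_iff dist_commute not_le)
  then have "norm ((k - x) + w) > 1"
    by (simp add: dist_norm algebra_simps)
  then obtain e where e: "e \<bullet> w > 0"
    and spindle: "\<And>g. norm g \<le> 1 \<Longrightarrow> norm (g - (k - x)) \<le> 1 \<Longrightarrow> norm (g - e) \<le> 1"
    using spindle_point_beyond_hyperplane[OF w] by blast
  obtain A where A: "K = cdual A" using K by (auto simp: ball_bodies_def)
  have "x + e \<in> K"
    unfolding A mem_cdual
  proof
    fix a assume "a \<in> A"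
    then have "norm (a - x) \<le> 1" "norm ((a - x) - (k - x)) \<le> 1"
      using x k by (auto simp: A mem_cdual dist_norm)
    then have "norm ((a - x) - e) \<le> 1" by (rule spindle)
    then show "dist a (x + e) \<le> 1" by (simp add: dist_norm algebra_simps)
  qed
  with max e show False by (auto simp: inner_add_left)
qed

lemma ball_body_support_point:
  assumes K: "K \<in> ball_bodies" "K \<noteq> {}" "K \<noteq> UNIV" and w: "norm w = 1"
  shows "\<exists>x\<in>K. x - w \<in> cdual K"
proof -
  obtain x where x: "x \<in> K" "\<forall>k\<in>K. k \<bullet> w \<le> x \<bullet> w"
    using continuous_attains_sup[OF compact_ball_body[OF K(1,3)] K(2), of "\<lambda>k. k \<bullet> w"]
      continuous_on_inner continuous_on_id continuous_on_const by blast
  then have "K \<subseteq> cball (x - w) 1"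
    using ball_body_subset_supporting_ball[OF K(1) w] by blast
  then have "x - w \<in> cdual K"
    by (auto simp: mem_cdual subset_iff dist_commute)
  with x show ?thesis by blast
qed

lemma cdual_subset_closed_convex:
  fixes S T :: "'a::euclidean_space set"
  assumes S: "closed S" "convex S"
    and translates: "\<And>w. norm w = 1 \<Longrightarrow> \<exists>q\<in>T. q - w \<in> S"
  shows "cdual T \<subseteq> S"
proof
  fix z assume z: "z \<in> cdual T"
  show "z \<in> S"
  proof (rule ccontr)
    assume "z \<notin> S"
    then obtain a b where ab: "a \<bullet> z < b" "\<forall>x\<in>S. b < a \<bullet> x"
      using separating_hyperplane_closed_point[OF S(2,1)] by blast
    have "S \<noteq> {}"
      using translates vector_choose_size[of 1] by (metis empty_iff zero_le_one)
    then have "a \<noteq> 0" using ab by auto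
    define w where "w = a /\<^sub>R norm a"
    have "norm w = 1" using \<open>a \<noteq> 0\<close> by (simp add: w_def)
    then obtain q where q: "q \<in> T" "q - w \<in> S" using translates by blast
    have "a \<bullet> w = norm a"
      using \<open>a \<noteq> 0\<close> by (simp add: w_def dot_square_norm power2_eq_square)
    then have "norm a < a \<bullet> (q - z)"
      using ab q by (auto simp: inner_diff_right)
    also have "\<dots> \<le> norm a * norm (q - z)"
      by (simp add: norm_cauchy_schwarz)
    finally have "1 < norm (q - z)" using \<open>a \<noteq> 0\<close> by simp
    with z q show False by (auto simp: mem_cdual dist_norm)
  qed
qed

lemma cdual_mink_sym_subset:
  assumes u: "norm u = 1" and K: "K \<in> ball_bodies" "K \<noteq> {}" "K \<noteq> UNIV"
  shows "cdual (mink_sym u K) \<subseteq> mink_sym u (cdual K)"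
proof (rule cdual_subset_closed_convex)
  have "compact (cdual K)" using K(2) by (rule compact_cdual)
  then show "closed (mink_sym u (cdual K))"
    by (intro compact_imp_closed compact_mink_sym)
  show "convex (mink_sym u (cdual K))"
    by (intro convex_mink_sym convex_cdual)
next
  fix w :: 'a assume w: "norm w = 1"
  obtain x1 where x1: "x1 \<in> K" "x1 - w \<in> cdual K"
    using ball_body_support_point[OF K w] by blast
  obtain x2 where x2: "x2 \<in> K" "x2 - refl_hyp u w \<in> cdual K"
    using ball_body_support_point[OF K, of "refl_hyp u w"] w norm_refl_hyp[OF u] by auto
  define q where "q = (1/2) *\<^sub>R x1 + (1/2) *\<^sub>R refl_hyp u x2"
  have "q - w = (1/2) *\<^sub>R (x1 - w) + (1/2) *\<^sub>R refl_hyp u (x2 - refl_hyp u w)"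
    by (simp add: q_def linear_diff[OF linear_refl_hyp] refl_hyp_refl_hyp[OF u] algebra_simps
        flip: scaleR_add_left)
  then have "q - w \<in> mink_sym u (cdual K)"
    using x1 x2 by (auto simp: mem_mink_sym)
  moreover have "q \<in> mink_sym u K"
    using x1 x2 by (auto simp: mem_mink_sym q_def)
  ultimately show "\<exists>q\<in>mink_sym u K. q - w \<in> mink_sym u (cdual K)" by blast
qed

lemma mink_sym_cdual:
  assumes u: "norm u = 1" and K: "K \<in> ball_bodies"
  shows "mink_sym u (cdual K) = cdual (mink_sym u K)"
proof -
  consider "K = {}" | "K = UNIV" | "K \<noteq> {}" "K \<noteq> UNIV" by blast
  then show ?thesis
  proof cases
    case 3
    then show ?thesis
      using mink_sym_cdual_subset[OF u] cdual_mink_sym_subset[OF u K] by blast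
  qed (simp_all add: u)
qed

text \<open>
  Every line parallel to \<open>u\<close> meets the slab \<open>0 \<le> x \<bullet> u \<le> 1\<close> in a parameter
  interval of length one, so by Fubini and translation invariance this integral
  counts each point of \<open>S\<close> exactly once.
\<close>
lemma emeasure_lborel_eq_line_sections:
  fixes u :: "'a::euclidean_space"
  assumes u: "norm u = 1" and S[measurable]: "S \<in> sets borel"
  shows "emeasure lborel S =
    (\<integral>\<^sup>+x. indicator {x. x \<bullet> u \<in> {0..1}} x * emeasure lborel {t::real. x + t *\<^sub>R u \<in> S} \<partial>lborel)"
proof -
  define slab where "slab = {x::'a. x \<bullet> u \<in> {0..1}}"
  have [measurable]: "slab \<in> sets borel" by (simp add: slab_def)
  have "emeasure lborel S = (\<integral>\<^sup>+y. (\<integral>\<^sup>+t. indicator slab (y - t *\<^sub>R u) * indicator S y \<partial>lborel) \<partial>lborel)"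
  proof -
    have "(\<integral>\<^sup>+t. indicator slab (y - t *\<^sub>R u) \<partial>lborel) = 1" for y
    proof -
      have "(\<integral>\<^sup>+t. indicator slab (y - t *\<^sub>R u) \<partial>lborel)
          = (\<integral>\<^sup>+t. indicator {y \<bullet> u - 1 .. y \<bullet> u} t \<partial>lborel)"
        using u by (intro nn_integral_cong) (auto simp: slab_def indicator_def inner_diff_left norm_eq_1)
      then show ?thesis by simp
    qed
    then show ?thesis by (simp add: nn_integral_multc)
  qed
  also have "\<dots> = (\<integral>\<^sup>+t. (\<integral>\<^sup>+y. indicator slab (y - t *\<^sub>R u) * indicator S y \<partial>lborel) \<partial>lborel)"
    by (rule lborel_pair.Fubini'[symmetric]) measurable
  also have "\<dots> = (\<integral>\<^sup>+t. (\<integral>\<^sup>+x. indicator slab x * indicator S (x + t *\<^sub>R u) \<partial>lborel) \<partial>lborel)"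
  proof -
    have "(\<integral>\<^sup>+x. indicator slab x * indicator S (x + t *\<^sub>R u) \<partial>lborel)
      = (\<integral>\<^sup>+x. indicator slab x * indicator S (x + t *\<^sub>R u) \<partial>distr lborel borel ((+) (- (t *\<^sub>R u))))"
      for t :: real
      by (simp add: lborel_distr_plus)
    also have "\<dots> t = (\<integral>\<^sup>+y. indicator slab (y - t *\<^sub>R u) * indicator S y \<partial>lborel)" for t
      by (subst nn_integral_distr) simp_all
    finally show ?thesis by simp
  qed
  also have "\<dots> = (\<integral>\<^sup>+x. (\<integral>\<^sup>+t. indicator slab x * indicator S (x + t *\<^sub>R u) \<partial>lborel) \<partial>lborel)"
    by (rule lborel_pair.Fubini') measurable
  also have "\<dots> = (\<integral>\<^sup>+x. indicator slab x * emeasure lborel {t. x + t *\<^sub>R u \<in> S} \<partial>lborel)"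
  proof (intro nn_integral_cong)
    fix x :: 'a
    have "{t. x + t *\<^sub>R u \<in> S} \<in> sets lborel" by measurable
    then have "emeasure lborel {t. x + t *\<^sub>R u \<in> S} = (\<integral>\<^sup>+t. indicator {t. x + t *\<^sub>R u \<in> S} t \<partial>lborel)"
      by simp
    also have "\<dots> = (\<integral>\<^sup>+t. indicator S (x + t *\<^sub>R u) \<partial>lborel)"
      by (rule nn_integral_cong) (simp add: indicator_def)
    finally show "(\<integral>\<^sup>+t. indicator slab x * indicator S (x + t *\<^sub>R u) \<partial>lborel)
      = indicator slab x * emeasure lborel {t. x + t *\<^sub>R u \<in> S}"
      by (simp add: nn_integral_cmult)
  qed
  finally show ?thesis by (simp add: slab_def)
qed

lemma midpoint_line_refl_hyp_line:
  assumes "norm u = 1"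
  shows "(1/2) *\<^sub>R (x + s1 *\<^sub>R u) + (1/2) *\<^sub>R refl_hyp u (x + s2 *\<^sub>R u)
    = x + ((s1 - s2) / 2 - x \<bullet> u) *\<^sub>R u"
  using assms
  by (simp add: refl_hyp_def norm_eq_1 algebra_simps diff_divide_distrib)
    (simp flip: scaleR_add_left add: scaleR_2)

lemma line_section_eq_interval:
  fixes u x :: "'a::euclidean_space"
  assumes u: "norm u = 1" and L: "compact L" "convex L"
  obtains a b where "{t::real. x + t *\<^sub>R u \<in> L} = {a..b}"
proof -
  define F where "F = {t::real. x + t *\<^sub>R u \<in> L}"
  have "closed ((\<lambda>t. x + t *\<^sub>R u) -` L)"
    using L(1) by (intro continuous_closed_vimage compact_imp_closed continuous_intros)
  then have "closed F" by (simp add: F_def vimage_def)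
  moreover have "bounded F"
  proof (rule bounded_subset)
    show "bounded ((\<lambda>y. (y - x) \<bullet> u) ` L)"
      using L(1) by (intro compact_imp_bounded compact_continuous_image continuous_intros)
    show "F \<subseteq> (\<lambda>y. (y - x) \<bullet> u) ` L"
      using u by (force simp: F_def norm_eq_1)
  qed
  moreover have "convex F"
    unfolding convex_def
  proof (intro ballI allI impI)
    fix s t a b :: real
    assume "s \<in> F" "t \<in> F" "0 \<le> a" "0 \<le> b" "a + b = 1"
    moreover from \<open>a + b = 1\<close>
    have "x + (a * s + b * t) *\<^sub>R u = a *\<^sub>R (x + s *\<^sub>R u) + b *\<^sub>R (x + t *\<^sub>R u)"
      by (simp add: algebra_simps flip: scaleR_add_left)
    ultimately show "a *\<^sub>R s + b *\<^sub>R t \<in> F"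
      using L(2) by (simp add: F_def convex_def)
  qed
  ultimately show ?thesis
    using that connected_compact_interval_1 convex_connected compact_eq_bounded_closed
    unfolding F_def by metis
qed

lemma emeasure_line_section_le_mink_sym:
  fixes u x :: "'a::euclidean_space"
  assumes u: "norm u = 1" and L: "compact L" "convex L"
  shows "emeasure lborel {t::real. x + t *\<^sub>R u \<in> L}
    \<le> emeasure lborel {t::real. x + t *\<^sub>R u \<in> mink_sym u L}"
proof -
  obtain a b where F: "{t::real. x + t *\<^sub>R u \<in> L} = {a..b}"
    using line_section_eq_interval[OF u L] .
  show ?thesis
  proof (cases "a \<le> b")
    case False
    then show ?thesis by (simp add: F)
  next
    case True
    define c where "c = - (x \<bullet> u)"
    define r where "r = (b - a) / 2"
    have "{c - r .. c + r} \<subseteq> {t. x + t *\<^sub>R u \<in> mink_sym u L}"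
    proof
      fix \<tau> assume \<tau>: "\<tau> \<in> {c - r .. c + r}"
      define s1 where "s1 = (a + b) / 2 + (\<tau> - c)"
      define s2 where "s2 = (a + b) / 2 - (\<tau> - c)"
      have "s1 \<in> {a..b}" "s2 \<in> {a..b}"
        using \<tau> by (auto simp: s1_def s2_def r_def field_simps)
      then have "x + s1 *\<^sub>R u \<in> L" "x + s2 *\<^sub>R u \<in> L"
        by (simp_all flip: F)
      moreover have "(s1 - s2) / 2 - x \<bullet> u = \<tau>"
        by (simp add: s1_def s2_def c_def field_simps)
      then have "x + \<tau> *\<^sub>R u = (1/2) *\<^sub>R (x + s1 *\<^sub>R u) + (1/2) *\<^sub>R refl_hyp u (x + s2 *\<^sub>R u)"
        by (simp add: midpoint_line_refl_hyp_line[OF u])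
      ultimately show "\<tau> \<in> {t. x + t *\<^sub>R u \<in> mink_sym u L}"
        unfolding mem_Collect_eq mem_mink_sym by blast
    qed
    moreover have "{t. x + t *\<^sub>R u \<in> mink_sym u L} \<in> sets lborel"
    proof -
      have [measurable]: "mink_sym u L \<in> sets borel"
        using L(1) by (intro borel_closed compact_imp_closed compact_mink_sym)
      show ?thesis by measurable
    qed
    ultimately have "emeasure lborel {c - r .. c + r} \<le> emeasure lborel {t. x + t *\<^sub>R u \<in> mink_sym u L}"
      by (rule emeasure_mono)
    moreover have "emeasure lborel {c - r .. c + r} = emeasure lborel {a..b}"
    proof -
      have "c - r \<le> c + r" "(c + r) - (c - r) = b - a"
        using True by (auto simp: r_def field_simps)
      then show ?thesis using True by (simp only: emeasure_lborel_Icc)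
    qed
    ultimately show ?thesis by (simp add: F)
  qed
qed

lemma emeasure_le_mink_sym:
  fixes u :: "'a::euclidean_space"
  assumes u: "norm u = 1" and L: "compact L" "convex L"
  shows "emeasure lebesgue L \<le> emeasure lebesgue (mink_sym u L)"
proof -
  have borel: "L \<in> sets borel" "mink_sym u L \<in> sets borel"
    using L(1) by (auto intro: borel_closed compact_imp_closed compact_mink_sym)
  have "emeasure lborel L \<le> emeasure lborel (mink_sym u L)"
    unfolding emeasure_lborel_eq_line_sections[OF u \<open>L \<in> sets borel\<close>]
      emeasure_lborel_eq_line_sections[OF u \<open>mink_sym u L \<in> sets borel\<close>]
    by (intro nn_integral_mono mult_left_mono emeasure_line_section_le_mink_sym[OF u L]) simp_all
  then show ?thesis by (simp add: borel)
qed

theorem lemma2p1: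
  fixes u :: "'a::euclidean_space" and K :: "'a set"
  assumes "norm u = 1" and "K \<in> ball_bodies"
  shows "mink_sym u K \<in> ball_bodies
    \<and> mink_sym u (cdual K) = cdual (mink_sym u K)
    \<and> emeasure lebesgue (mink_sym u (cdual K)) \<ge> emeasure lebesgue (cdual K)"
proof -
  note u = assms(1) and K = assms(2)
  have dual: "mink_sym u (cdual K) = cdual (mink_sym u K)"
    by (rule mink_sym_cdual[OF u K])
  have "mink_sym u K = cdual (mink_sym u (cdual K))"
    using mink_sym_cdual[OF u cdual_in_ball_bodies[of K]] cdual_cdual_ball_body[OF K] by simp
  then have body: "mink_sym u K \<in> ball_bodies"
    by (metis cdual_in_ball_bodies)
  have vol: "emeasure lebesgue (cdual K) \<le> emeasure lebesgue (mink_sym u (cdual K))"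
  proof (cases "K = {}")
    case True
    then show ?thesis using u by simp
  next
    case False
    then show ?thesis by (intro emeasure_le_mink_sym u compact_cdual convex_cdual)
  qed
  show ?thesis using body dual vol by simp
qed

end
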